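(* Let $X$ be a nonempty set, let $S$ be a semigroup, let $\phi':X\to E(S)$ be a one-to-one mapping, and let $T$ be a regular subsemigroup of $S$ containing $X\phi'$ such that $T$ has no proper regular subsemigroup containing $X\phi'$. Then there is a semigroup homomorphism $\psi:FT(X)\to S$ with $[x]\psi=x\phi'$ for all $x\in X$ and $(FT(X))\psi=T$.
   Context: Let $1$ be a symbol not in $X$. Elements of height $\ge 2$ are triples $g=(g^l,g^c,g^r)$. Set $\Gamma_0(X)=\{1\}$, $\Gamma_1(X)=X$, identify each $x\in X$ with $(1,x,1)$. For $i\ge 2$, $\Gamma_i(X)$ is the set of triples $g\in\Gamma_{i-1}(X)\times\Gamma_{i-2}(X)\times\Gamma_{i-1}(X)$ with $g^l\neq g^r$ and $g^c\in\{(g^l)^l,(g^l)^r\}\cap\{(g^r)^l,(g^r)^r\}$. $\Gamma(X)=\bigcup_{i\ge0}\Gamma_i(X)$. Let $\rho$ be the smallest congruence on $\Gamma(X)^+$ containing $(1g,g),(g1,g),(gg,g)$ for all $g\in\Gamma(X)$, and $(g^cg^lg,g)$, $(gg^rg^c,g)$, $(g^rg^cgg^cg^l,\,g^rg^cg^l)$ for all $g\in\Gamma_i(X)$, $i\ge2$. $FT^1(X)=\Gamma(X)^+/\rho$, $[u]$ the class of $u$, $FT(X)=FT^1(X)\setminus\{[1]\}$. $E(S)$ is the set of idempotents of $S$. *)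

theory Defs
  imports Main
begin

text \<open>Elements of Gamma(X): the symbol 1, generators x (identified with (1,x,1)),
  and triples (g^l, g^c, g^r).\<close>
datatype 'a gam = One | Gen 'a | Tri "'a gam" "'a gam" "'a gam"

fun lft :: "'a gam \<Rightarrow> 'a gam" where
  "lft (Gen x) = One"
| "lft (Tri l c r) = l"
| "lft One = One"

fun rgt :: "'a gam \<Rightarrow> 'a gam" where
  "rgt (Gen x) = One"
| "rgt (Tri l c r) = r"
| "rgt One = One"

fun ctr :: "'a gam \<Rightarrow> 'a gam" where
  "ctr (Tri l c r) = c"
| "ctr g = g"

fun gamma :: "nat \<Rightarrow> 'a set \<Rightarrow> 'a gam set" where
  "gamma 0 X = {One}"
| "gamma (Suc 0) X = Gen ` X"
| "gamma (Suc (Suc i)) X =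
     {Tri l c r | l c r. l \<in> gamma (Suc i) X \<and> c \<in> gamma i X \<and> r \<in> gamma (Suc i) X
        \<and> l \<noteq> r \<and> c \<in> {lft l, rgt l} \<inter> {lft r, rgt r}}"

definition Gamma :: "'a set \<Rightarrow> 'a gam set" where
  "Gamma X = (\<Union>i. gamma i X)"

definition words :: "'a set \<Rightarrow> 'a gam list set" where
  "words X = {w. w \<noteq> [] \<and> set w \<subseteq> Gamma X}"

inductive rho :: "'a set \<Rightarrow> 'a gam list \<Rightarrow> 'a gam list \<Rightarrow> bool" for X where
  gen1: "g \<in> Gamma X \<Longrightarrow> rho X [One, g] [g]"
| gen2: "g \<in> Gamma X \<Longrightarrow> rho X [g, One] [g]"
| gen3: "g \<in> Gamma X \<Longrightarrow> rho X [g, g] [g]"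
| gen4: "i \<ge> 2 \<Longrightarrow> g \<in> gamma i X \<Longrightarrow> rho X [ctr g, lft g, g] [g]"
| gen5: "i \<ge> 2 \<Longrightarrow> g \<in> gamma i X \<Longrightarrow> rho X [g, rgt g, ctr g] [g]"
| gen6: "i \<ge> 2 \<Longrightarrow> g \<in> gamma i X \<Longrightarrow>
          rho X [rgt g, ctr g, g, ctr g, lft g] [rgt g, ctr g, lft g]"
| refl: "w \<in> words X \<Longrightarrow> rho X w w"
| sym: "rho X u v \<Longrightarrow> rho X v u"
| trans: "rho X u v \<Longrightarrow> rho X v w \<Longrightarrow> rho X u w"
| compat: "rho X u v \<Longrightarrow> set p \<subseteq> Gamma X \<Longrightarrow> set q \<subseteq> Gamma X \<Longrightarrow>
          rho X (p @ u @ q) (p @ v @ q)"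

definition cls :: "'a set \<Rightarrow> 'a gam list \<Rightarrow> 'a gam list set" where
  "cls X w = {v. rho X w v}"

definition FT1 :: "'a set \<Rightarrow> 'a gam list set set" where
  "FT1 X = cls X ` words X"

definition FT :: "'a set \<Rightarrow> 'a gam list set set" where
  "FT X = FT1 X - {cls X [One]}"

definition ft_mult :: "'a set \<Rightarrow> 'a gam list set \<Rightarrow> 'a gam list set \<Rightarrow> 'a gam list set" where
  "ft_mult X A B = {w. \<exists>u\<in>A. \<exists>v\<in>B. rho X (u @ v) w}"

definition idempotents :: "'s::semigroup_mult set" where
  "idempotents = {e. e * e = e}"

definition subsemigroup :: "'s::semigroup_mult set \<Rightarrow> bool" where
  "subsemigroup T \<longleftrightarrow> (\<forall>a\<in>T. \<forall>b\<in>T. a * b \<in> T)"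

definition regular_set :: "'s::semigroup_mult set \<Rightarrow> bool" where
  "regular_set T \<longleftrightarrow> (\<forall>a\<in>T. \<exists>b\<in>T. a * b * a = a)"

end

theory Submission
  imports Defs
begin

(*
  Send every g in \<Gamma>(X) to an idempotent \<theta> g of S\<^sup>1: a generator x goes to x\<phi>', and a
  triple (l, c, r) goes to an element of the sandwich set of \<theta> r \<theta> c and \<theta> c \<theta> l, which is
  nonempty because T is regular.  The relations of \<rho> hold for these values, so evaluating
  words gives a homomorphism \<psi> on FT(X); its image R lies in T and contains X\<phi>', so by the
  minimality of T it remains to show that R is regular.

  Every word has the same value as a walk in \<Gamma>(X) in which consecutive elements are parent
  and child.  With heights bounded by M, a walk can be shortened without losing regularity of
  its value: drop an ascending first or descending last step, cancel a backtrack x u x, or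
  replace a valley x u y by x (y, u, x) y if the new triple has height at most M.  A walk
  admitting none of these is a zigzag l c l' c' l'' ... at height M, and its value is regular
  because it is sandwiched around the value of the zigzag (l', c, l) l' (l'', c', l') ... one
  level higher, which is shorter.
*)

text \<open>The monoid \<open>S\<^sup>1\<close>; the symbol \<open>1\<close> of \<open>\<Gamma>(X)\<close> will be sent to its identity.\<close>

datatype 'a with_one = Unit | El (the_El: 'a)

instantiation with_one :: (semigroup_mult) monoid_mult
begin

definition one_with_one :: "'a with_one" where "one_with_one = Unit"

fun times_with_one :: "'a with_one \<Rightarrow> 'a with_one \<Rightarrow> 'a with_one" where
  "times_with_one Unit y = y"
| "times_with_one x Unit = x"
| "times_with_one (El a) (El b) = El (a * b)"

instance
proof
  fix a b c :: "'a with_one"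
  show "a * b * c = a * (b * c)"
    by (cases a; cases b; cases c) (simp_all add: mult.assoc)
  show "1 * a = a" by (simp add: one_with_one_def)
  show "a * 1 = a" by (cases a) (simp_all add: one_with_one_def)
qed

end

lemma El_neq_one [simp]: "El a \<noteq> 1" "1 \<noteq> El a"
  by (simp_all add: one_with_one_def)

fun level :: "'a gam \<Rightarrow> nat" where
  "level One = 0"
| "level (Gen x) = 1"
| "level (Tri l c r) = Suc (level l)"

lemma level_gamma: "g \<in> gamma i X \<Longrightarrow> level g = i"
  by (induction i X arbitrary: g rule: gamma.induct) auto

lemma Gamma_iff_gamma_level: "g \<in> Gamma X \<longleftrightarrow> g \<in> gamma (level g) X"
  unfolding Gamma_def using level_gamma by fastforce

lemma gamma_ge_2_Tri: "2 \<le> i \<Longrightarrow> g \<in> gamma i X \<Longrightarrow> \<exists>l c r. g = Tri l c r"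
  by (cases g) (auto dest: level_gamma)

lemma gamma_subset_Gamma: "g \<in> gamma i X \<Longrightarrow> g \<in> Gamma X"
  unfolding Gamma_def by blast

lemma One_in_Gamma [simp]: "One \<in> Gamma X"
  by (simp add: Gamma_iff_gamma_level)

lemma Gen_in_Gamma_iff [simp]: "Gen x \<in> Gamma X \<longleftrightarrow> x \<in> X"
  by (auto simp: Gamma_iff_gamma_level)

definition parent :: "'a gam \<Rightarrow> 'a gam \<Rightarrow> bool" where
  "parent p g \<longleftrightarrow> g \<noteq> One \<and> (p = lft g \<or> p = rgt g)"

definition adjacent :: "'a gam \<Rightarrow> 'a gam \<Rightarrow> bool" where
  "adjacent a b \<longleftrightarrow> parent a b \<or> parent b a"

lemma parent_Tri [simp]: "parent p (Tri l c r) \<longleftrightarrow> p = l \<or> p = r"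
  by (auto simp: parent_def)

lemma parent_Gen [simp]: "parent p (Gen x) \<longleftrightarrow> p = One"
  by (auto simp: parent_def)

lemma not_parent_One [simp]: "\<not> parent p One"
  by (simp add: parent_def)

lemma Tri_in_GammaD:
  assumes "Tri l c r \<in> Gamma X"
  shows "l \<in> Gamma X" "r \<in> Gamma X" "c \<in> Gamma X" "parent c l" "parent c r" "l \<noteq> r"
    and "level l = Suc (level c)" "level r = level l"
proof -
  have Tri: "Tri l c r \<in> gamma (Suc (level l)) X"
    using assms unfolding Gamma_iff_gamma_level by simp
  then obtain k where k: "level l = Suc k"
    by (cases "level l") auto
  then have gam: "l \<in> gamma (Suc k) X" "r \<in> gamma (Suc k) X" "c \<in> gamma k X"
    and "l \<noteq> r" "c \<in> {lft l, rgt l}" "c \<in> {lft r, rgt r}"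
    using Tri unfolding k by auto
  moreover have "l \<noteq> One" "r \<noteq> One"
    using gam(1,2) level_gamma by fastforce+
  ultimately show "parent c l" "parent c r" "l \<noteq> r"
    by (auto simp: parent_def)
  show "l \<in> Gamma X" "r \<in> Gamma X" "c \<in> Gamma X"
    using gam unfolding Gamma_def by blast+
  show "level l = Suc (level c)" "level r = level l"
    using gam level_gamma by metis+
qed

lemma parent_in_Gamma:
  assumes "parent p g" "g \<in> Gamma X"
  shows "p \<in> Gamma X" "level g = Suc (level p)"
  using assms by (cases g; auto dest: Tri_in_GammaD)+

lemma Tri_in_Gamma_iff:
  "Tri l c r \<in> Gamma X \<longleftrightarrow> l \<in> Gamma X \<and> r \<in> Gamma X \<and> parent c l \<and> parent c r \<and> l \<noteq> r"
proof
  assume *: "l \<in> Gamma X \<and> r \<in> Gamma X \<and> parent c l \<and> parent c r \<and> l \<noteq> r"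
  then have "level l = Suc (level c)" "level r = Suc (level c)" "c \<in> Gamma X"
    using parent_in_Gamma by blast+
  then have "l \<in> gamma (Suc (level c)) X" "r \<in> gamma (Suc (level c)) X" "c \<in> gamma (level c) X"
    using * Gamma_iff_gamma_level by metis+
  moreover have "c \<in> {lft l, rgt l} \<inter> {lft r, rgt r}"
    using * by (auto simp: parent_def)
  ultimately have "Tri l c r \<in> gamma (Suc (Suc (level c))) X"
    using * by (simp only: gamma.simps) blast
  then show "Tri l c r \<in> Gamma X"
    unfolding Gamma_def by blast
qed (use Tri_in_GammaD in metis)

lemma parent_asym: "parent a b \<Longrightarrow> b \<in> Gamma X \<Longrightarrow> \<not> parent b a"
  using parent_in_Gamma by (metis Suc_n_not_le_n le_Suc_eq)

section \<open>Sandwich elements\<close>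

text \<open>\<open>sandwich P Q H\<close> says that \<open>H\<close> lies in the sandwich set \<open>S(P, Q)\<close> of Nambooripad.\<close>

definition sandwich :: "'s::semigroup_mult \<Rightarrow> 's \<Rightarrow> 's \<Rightarrow> bool" where
  "sandwich P Q H \<longleftrightarrow> H * H = H \<and> H * P = H \<and> Q * H = H \<and> P * H * Q = P * Q"

lemma sandwich_El [simp]: "sandwich (El p) (El q) (El h) \<longleftrightarrow> sandwich p q h"
  by (simp add: sandwich_def)

lemma sandwich_exists:
  fixes T :: "'s::semigroup_mult set"
  assumes "subsemigroup T" "regular_set T" "p \<in> T" "q \<in> T" "p * p = p" "q * q = q"
  shows "\<exists>h\<in>T. sandwich p q h"
proof -
  have pq: "p * q \<in> T"
    using assms by (simp add: subsemigroup_def)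
  then obtain x where x: "x \<in> T" "p * q * x * (p * q) = p * q"
    using assms(2) by (auto simp: regular_set_def)
  have pqx: "p * (q * (x * (p * (q * z)))) = p * (q * z)" for z
    using arg_cong[OF x(2), of "\<lambda>w. w * z"] by (simp add: mult.assoc)
  have pp: "p * (p * z) = p * z" and qq: "q * (q * z) = q * z" for z
    using assms(5,6) by (metis mult.assoc)+
  define h where "h = q * (x * (p * q) * x) * p"
  have "h \<in> T"
    unfolding h_def using assms x(1) pq by (simp add: subsemigroup_def)
  moreover have "sandwich p q h"
    unfolding sandwich_def h_def using x(2)
    by (simp add: mult.assoc pqx pp qq assms(5,6))
  ultimately show ?thesis by blast
qed

context
  fixes R C L H :: "'s::semigroup_mult"
  assumes sandwich: "sandwich (R * C) (C * L) H" and idem: "C * C = C"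
begin

lemma sandwich_RCL: "R * C * L = R * C * H * (C * L)"
proof -
  have "R * C * L = R * (C * C) * L"
    using idem by simp
  then show ?thesis
    using sandwich by (simp add: sandwich_def mult.assoc)
qed

lemma sandwich_center: "C * H = H" "H * C = H"
proof -
  have HRC: "H * (R * C) = H" and CLH: "C * L * H = H"
    using sandwich by (simp_all add: sandwich_def)
  have "C * H = (C * C) * L * H"
    using CLH by (simp add: mult.assoc)
  then show "C * H = H"
    using CLH idem by simp
  have "H * C = H * (R * (C * C))"
    using HRC by (metis mult.assoc)
  then show "H * C = H"
    using HRC idem by simp
qed

lemma sandwich_insert: "R * C * L = R * C * H * L"
proof -
  have "R * C * H * (C * L) = R * C * (H * C) * L"
    by (simp add: mult.assoc)
  then show ?thesis
    using sandwich_RCL sandwich_center(2) by simp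
qed

lemma sandwich_parents: "H * R * H = H" "H * L * H = H"
proof -
  have HH: "H * H = H" and HRC: "H * (R * C) = H" and CLH: "C * L * H = H"
    using sandwich by (simp_all add: sandwich_def)
  have "H * (R * C * L) * H = (H * (R * C)) * H * (C * L * H)"
    using sandwich_RCL by (simp add: mult.assoc)
  then have middle: "H * (R * C * L) * H = H"
    using HH HRC CLH by simp
  have "H * R * H = H * R * (C * L * H)" "H * L * H = (H * (R * C)) * L * H"
    using CLH HRC by simp_all
  then show "H * R * H = H" "H * L * H = H"
    using middle by (simp_all add: mult.assoc)
qed

end

section \<open>Interpreting \<open>\<Gamma>(X)\<close> in \<open>S\<^sup>1\<close>\<close>

text \<open>The relations \<open>(g\<^sup>c g\<^sup>l g, g)\<close>, \<open>(g g\<^sup>r g\<^sup>c, g)\<close> and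
  \<open>(g\<^sup>r g\<^sup>c g g\<^sup>c g\<^sup>l, g\<^sup>r g\<^sup>c g\<^sup>l)\<close> of \<open>\<rho>\<close> say precisely that \<open>g\<close> is sent into the sandwich set
  of \<open>g\<^sup>r g\<^sup>c\<close> and \<open>g\<^sup>c g\<^sup>l\<close>.\<close>

fun val :: "('a \<Rightarrow> 's::semigroup_mult) \<Rightarrow> 's set \<Rightarrow> 'a gam \<Rightarrow> 's with_one" where
  "val \<phi> T One = 1"
| "val \<phi> T (Gen x) = El (\<phi> x)"
| "val \<phi> T (Tri l c r) =
     El (SOME h. h \<in> T \<and> sandwich (val \<phi> T r * val \<phi> T c) (val \<phi> T c * val \<phi> T l) (El h))"

declare val.simps(3) [simp del]

locale idempotent_generators =
  fixes X :: "'a set" and \<phi> :: "'a \<Rightarrow> 's::semigroup_mult" and T :: "'s set"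
  assumes generators_idempotent: "\<phi> ` X \<subseteq> idempotents"
    and T_subsemigroup: "subsemigroup T"
    and T_regular: "regular_set T"
    and generators_in_T: "\<phi> ` X \<subseteq> T"
begin

abbreviation \<theta> :: "'a gam \<Rightarrow> 's with_one" where
  "\<theta> \<equiv> val \<phi> T"

abbreviation T1 :: "'s with_one set" where
  "T1 \<equiv> insert 1 (El ` T)"

lemma El_T_mult:
  assumes "x \<in> El ` T" "y \<in> T1"
  shows "x * y \<in> El ` T" "y * x \<in> El ` T"
  using assms T_subsemigroup by (auto simp: subsemigroup_def)

lemma T1_mult:
  assumes "x \<in> T1" "y \<in> T1"
  shows "x * y \<in> T1"
proof (cases "x = 1")
  case False
  then show ?thesis
    using assms El_T_mult(1)[of x y] by simp
qed (use assms in simp)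

lemma val_Tri:
  assumes "\<theta> l \<in> El ` T" "\<theta> r \<in> El ` T" "\<theta> c \<in> T1"
    and "\<theta> l * \<theta> c * \<theta> l = \<theta> l" "\<theta> r * \<theta> c * \<theta> r = \<theta> r"
  shows "\<theta> (Tri l c r) \<in> El ` T" "sandwich (\<theta> r * \<theta> c) (\<theta> c * \<theta> l) (\<theta> (Tri l c r))"
proof -
  obtain p where p: "\<theta> r * \<theta> c = El p" "p \<in> T"
    using El_T_mult(1)[OF assms(2,3)] by blast
  obtain q where q: "\<theta> c * \<theta> l = El q" "q \<in> T"
    using El_T_mult(2)[OF assms(1,3)] by blast
  have "(\<theta> r * \<theta> c) * (\<theta> r * \<theta> c) = (\<theta> r * \<theta> c * \<theta> r) * \<theta> c"
    "(\<theta> c * \<theta> l) * (\<theta> c * \<theta> l) = \<theta> c * (\<theta> l * \<theta> c * \<theta> l)"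
    by (simp_all add: mult.assoc)
  then have "p * p = p" "q * q = q"
    using assms(4,5) p(1) q(1) by simp_all
  then have "\<exists>h. h \<in> T \<and> sandwich (\<theta> r * \<theta> c) (\<theta> c * \<theta> l) (El h)"
    using sandwich_exists[OF T_subsemigroup T_regular p(2) q(2)] p(1) q(1) by auto
  from someI_ex[OF this]
  show "\<theta> (Tri l c r) \<in> El ` T" "sandwich (\<theta> r * \<theta> c) (\<theta> c * \<theta> l) (\<theta> (Tri l c r))"
    by (auto simp: val.simps(3))
qed

lemma val_invariant:
  "g \<in> Gamma X \<Longrightarrow> (g \<noteq> One \<longrightarrow> \<theta> g \<in> El ` T) \<and> \<theta> g * \<theta> g = \<theta> g
     \<and> (\<forall>p. parent p g \<longrightarrow> \<theta> g * \<theta> p * \<theta> g = \<theta> g)"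
proof (induction g)
  case (Gen x)
  then show ?case
    using generators_idempotent generators_in_T by (auto simp: idempotents_def)
next
  case (Tri l c r)
  note lcr = Tri_in_GammaD[OF Tri.prems]
  have "\<theta> l \<in> El ` T" "\<theta> r \<in> El ` T" "\<theta> c \<in> T1" "\<theta> c * \<theta> c = \<theta> c"
    "\<theta> l * \<theta> c * \<theta> l = \<theta> l" "\<theta> r * \<theta> c * \<theta> r = \<theta> r"
    using Tri.IH lcr by (auto simp: parent_def)
  note g = val_Tri[OF this(1-3,5-6)]
  have "\<theta> (Tri l c r) * \<theta> p * \<theta> (Tri l c r) = \<theta> (Tri l c r)" if "parent p (Tri l c r)" for p
    using that sandwich_parents[OF g(2) \<open>\<theta> c * \<theta> c = \<theta> c\<close>] by auto
  then show ?case
    using g by (simp add: sandwich_def)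
qed simp

lemma val_in_T: "g \<in> Gamma X \<Longrightarrow> g \<noteq> One \<Longrightarrow> \<theta> g \<in> El ` T"
  using val_invariant by blast

lemma val_in_T1: "g \<in> Gamma X \<Longrightarrow> \<theta> g \<in> T1"
  using val_in_T by (cases "g = One") auto

lemma val_idem: "g \<in> Gamma X \<Longrightarrow> \<theta> g * \<theta> g = \<theta> g"
  using val_invariant by blast

lemma val_parent: "g \<in> Gamma X \<Longrightarrow> parent p g \<Longrightarrow> \<theta> g * \<theta> p * \<theta> g = \<theta> g"
  using val_invariant by blast

lemma val_Tri_sandwich:
  assumes "Tri l c r \<in> Gamma X"
  shows "sandwich (\<theta> r * \<theta> c) (\<theta> c * \<theta> l) (\<theta> (Tri l c r))"
proof -
  note lcr = Tri_in_GammaD[OF assms]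
  then show ?thesis
    using val_Tri val_in_T val_in_T1 val_parent by (auto simp: parent_def)
qed

abbreviation \<Theta> :: "'a gam list \<Rightarrow> 's with_one" where
  "\<Theta> w \<equiv> prod_list (map \<theta> w)"

lemma rho_val_word: "rho X u w \<Longrightarrow> \<Theta> u = \<Theta> w"
proof (induction rule: rho.induct)
  case (gen3 g)
  then show ?case using val_idem by simp
next
  case (gen4 i g)
  then obtain l c r where "g = Tri l c r" "g \<in> Gamma X"
    using gamma_ge_2_Tri gamma_subset_Gamma by blast
  then show ?case
    using val_Tri_sandwich by (simp add: sandwich_def mult.assoc [symmetric])
next
  case (gen5 i g)
  then obtain l c r where "g = Tri l c r" "g \<in> Gamma X"
    using gamma_ge_2_Tri gamma_subset_Gamma by blast
  then show ?case
    using val_Tri_sandwich by (simp add: sandwich_def mult.assoc)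
next
  case (gen6 i g)
  then obtain l c r where g: "g = Tri l c r" "g \<in> Gamma X"
    using gamma_ge_2_Tri gamma_subset_Gamma by blast
  then have "\<theta> r * \<theta> c * \<theta> l = \<theta> r * \<theta> c * \<theta> g * (\<theta> c * \<theta> l)"
    using sandwich_RCL val_Tri_sandwich val_idem Tri_in_GammaD(3) by blast
  then show ?case
    using g by (simp add: mult.assoc)
qed simp_all

lemma val_word_in_T1: "set w \<subseteq> Gamma X \<Longrightarrow> \<Theta> w \<in> T1"
proof (induction w)
  case (Cons g w)
  then show ?case
    using T1_mult[of "\<theta> g" "\<Theta> w"] val_in_T1[of g] by simp
qed simp

lemma val_word_eq_1: "set w \<subseteq> Gamma X \<Longrightarrow> \<Theta> w = 1 \<Longrightarrow> set w \<subseteq> {One}"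
proof (induction w)
  case (Cons g w)
  have "g = One"
  proof (rule ccontr)
    assume "g \<noteq> One"
    then have "\<theta> g * \<Theta> w \<in> El ` T"
      using Cons.prems(1) El_T_mult(1) val_in_T val_word_in_T1 by simp
    then show False
      using Cons.prems(2) by auto
  qed
  then show ?case
    using Cons by simp
qed simp

end

definition regular_in :: "'s::semigroup_mult set \<Rightarrow> 's \<Rightarrow> bool" where
  "regular_in U x \<longleftrightarrow> (\<exists>t\<in>U. x * t * x = x)"

lemma regular_in_idem: "x \<in> U \<Longrightarrow> x * x = x \<Longrightarrow> regular_in U x"
  unfolding regular_in_def by (metis mult.assoc)

context
  fixes U :: "'s::semigroup_mult set"
  assumes closed: "subsemigroup U"
begin

lemma regular_in_prepend:
  assumes "regular_in U s" "y \<in> U" "y * a * s = s"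
  shows "regular_in U (a * s)"
proof -
  obtain t where t: "t \<in> U" "s * t * s = s"
    using assms(1) by (auto simp: regular_in_def)
  have "a * s * (t * y) * (a * s) = a * (s * t * (y * a * s))"
    by (simp add: mult.assoc)
  then have "a * s * (t * y) * (a * s) = a * s"
    using assms(3) t(2) by simp
  moreover have "t * y \<in> U"
    using closed t(1) assms(2) by (simp add: subsemigroup_def)
  ultimately show ?thesis
    unfolding regular_in_def by blast
qed

lemma regular_in_append:
  assumes "regular_in U s" "y \<in> U" "s * a * y = s"
  shows "regular_in U (s * a)"
proof -
  obtain t where t: "t \<in> U" "s * t * s = s"
    using assms(1) by (auto simp: regular_in_def)
  have "s * a * (y * t) * (s * a) = (s * a * y) * t * s * a"
    by (simp add: mult.assoc)
  then have "s * a * (y * t) * (s * a) = s * a"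
    using assms(3) t(2) by simp
  moreover have "y * t \<in> U"
    using closed t(1) assms(2) by (simp add: subsemigroup_def)
  ultimately show ?thesis
    unfolding regular_in_def by blast
qed

lemma regular_in_sandwiched:
  assumes "regular_in U b" "H \<in> U" "H' \<in> U"
    and "H * P = H" "H * b = b" "b * H' = b" "Q * H' = H'"
  shows "regular_in U (P * b * Q)"
proof -
  obtain t where t: "t \<in> U" "b * t * b = b"
    using assms(1) by (auto simp: regular_in_def)
  have "P * b * Q * (H' * t * H) * (P * b * Q) = P * (b * (Q * H')) * t * ((H * P) * b) * Q"
    by (simp add: mult.assoc)
  also have "\<dots> = P * (b * t * b) * Q"
    using assms(4-7) by (simp add: mult.assoc)
  finally have "P * b * Q * (H' * t * H) * (P * b * Q) = P * b * Q"
    using t(2) by simp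
  moreover have "H' * t * H \<in> U"
    using closed t(1) assms(2,3) by (simp add: subsemigroup_def)
  ultimately show ?thesis
    unfolding regular_in_def by blast
qed

end

section \<open>Walks in \<open>\<Gamma>(X)\<close>\<close>

fun up_path :: "'a gam \<Rightarrow> 'a gam list" where
  "up_path One = [One]"
| "up_path (Gen x) = [One, Gen x]"
| "up_path (Tri l c r) = up_path c @ [l, Tri l c r]"

fun down_path :: "'a gam \<Rightarrow> 'a gam list" where
  "down_path One = [One]"
| "down_path (Gen x) = [Gen x, One]"
| "down_path (Tri l c r) = Tri l c r # r # down_path c"

lemma up_path_Cons: "\<exists>U. up_path g = One # U"
  by (induction g) auto

lemma down_path_Cons: "\<exists>D. down_path g = g # D"
  by (cases g) auto

lemma last_up_path [simp]: "last (up_path g) = g"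
  by (induction g) auto

lemma last_down_path [simp]: "last (down_path g) = One"
proof (induction g)
  case (Tri l c r)
  then show ?case
    using down_path_Cons[of c] by auto
qed simp_all

lemma successively_glue:
  "successively P (xs @ [v]) \<Longrightarrow> successively P (v # ys) \<Longrightarrow> successively P (xs @ v # ys)"
  by (auto simp: successively_append_iff)

context idempotent_generators
begin

definition walk :: "'a gam list \<Rightarrow> bool" where
  "walk W \<longleftrightarrow> set W \<subseteq> Gamma X \<and> successively adjacent W"

lemma walk_glue: "walk (xs @ [v]) \<Longrightarrow> walk (v # ys) \<Longrightarrow> walk (xs @ v # ys)"
  unfolding walk_def using successively_glue by fastforce

lemma up_path_walk: "g \<in> Gamma X \<Longrightarrow> walk (up_path g) \<and> \<Theta> (up_path g) = \<theta> g"
proof (induction g)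
  case (Tri l c r)
  note lcr = Tri_in_GammaD[OF Tri.prems]
  have "walk (up_path c @ [l, Tri l c r])"
    using Tri.IH(2) lcr Tri.prems by (auto simp: walk_def adjacent_def successively_append_iff)
  moreover have "\<Theta> (up_path c @ [l, Tri l c r]) = \<theta> (Tri l c r)"
    using Tri.IH(2) lcr val_Tri_sandwich[OF Tri.prems]
    by (simp add: sandwich_def mult.assoc [symmetric])
  ultimately show ?case by simp
qed (auto simp: walk_def adjacent_def)

lemma down_path_walk: "g \<in> Gamma X \<Longrightarrow> walk (down_path g) \<and> \<Theta> (down_path g) = \<theta> g"
proof (induction g)
  case (Tri l c r)
  note lcr = Tri_in_GammaD[OF Tri.prems]
  obtain D where "down_path c = c # D"
    using down_path_Cons by blast
  then have "walk (Tri l c r # r # down_path c)"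
    using Tri.IH(2) lcr Tri.prems by (auto simp: walk_def adjacent_def)
  moreover have "\<Theta> (Tri l c r # r # down_path c) = \<theta> (Tri l c r)"
    using Tri.IH(2) lcr val_Tri_sandwich[OF Tri.prems]
    by (simp add: sandwich_def mult.assoc [symmetric])
  ultimately show ?case by simp
qed (auto simp: walk_def adjacent_def)

definition loop :: "'a gam \<Rightarrow> 'a gam list" where
  "loop g = up_path g @ tl (down_path g)"

lemma loop_walk:
  assumes g: "g \<in> Gamma X"
  shows "walk (loop g)" "\<exists>L. loop g = One # L" "last (loop g) = One" "\<Theta> (loop g) = \<theta> g"
proof -
  obtain U where U: "up_path g = One # U"
    using up_path_Cons by blast
  obtain D where D: "down_path g = g # D"
    using down_path_Cons by blast
  have up: "up_path g = butlast (up_path g) @ [g]"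
    using last_up_path[of g] by (metis U append_butlast_last_id list.distinct(1))
  then have "loop g = butlast (up_path g) @ g # D"
    using D unfolding loop_def by (metis append.assoc append_Cons append_Nil list.sel(3))
  then show "walk (loop g)"
    using walk_glue up up_path_walk[OF g] down_path_walk[OF g] D by metis
  show "\<exists>L. loop g = One # L"
    using U unfolding loop_def by simp
  show "last (loop g) = One"
    using D last_down_path[of g] last_up_path[of g] unfolding loop_def by (cases "D = []") auto
  have "\<Theta> (loop g) = \<Theta> (up_path g) * \<Theta> D"
    using D unfolding loop_def by simp
  also have "\<dots> = \<Theta> (down_path g)"
    using D up_path_walk[OF g] by simp
  finally show "\<Theta> (loop g) = \<theta> g"
    using down_path_walk[OF g] by simp
qed

lemma word_walk: "set w \<subseteq> Gamma X \<Longrightarrow> \<exists>W. walk (One # W) \<and> \<Theta> W = \<Theta> w"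
proof (induction w)
  case Nil
  show ?case
    by (rule exI[of _ "[]"]) (simp add: walk_def)
next
  case (Cons g w)
  then obtain W where W: "walk (One # W)" "\<Theta> W = \<Theta> w"
    by auto
  have g: "g \<in> Gamma X"
    using Cons.prems by simp
  obtain L where L: "loop g = One # L"
    using loop_walk(2)[OF g] by blast
  have split: "loop g = butlast (loop g) @ [One]"
    using loop_walk(3)[OF g] append_butlast_last_id[of "loop g"] L by simp
  then have "walk (butlast (loop g) @ One # W)"
    using walk_glue[OF _ W(1)] loop_walk(1)[OF g] by simp
  moreover have "butlast (loop g) @ One # W = One # L @ W"
    using split L by (metis append_Cons append_assoc append_Nil)
  ultimately have "walk (One # L @ W)"
    by simp
  moreover have "\<Theta> (L @ W) = \<Theta> (g # w)"
    using loop_walk(4)[OF g] L W(2) by simp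
  ultimately show ?case
    by blast
qed

end

section \<open>Zigzags and their lifts\<close>

fun lift_zigzag :: "'a gam list \<Rightarrow> 'a gam list" where
  "lift_zigzag (l # c # l' # c' # W) = Tri l' c l # l' # lift_zigzag (l' # c' # W)"
| "lift_zigzag [l, c, l'] = [Tri l' c l]"
| "lift_zigzag _ = []"

lemma lift_zigzag_Cons: "\<exists>L. lift_zigzag (l # c # l' # W) = Tri l' c l # L"
  by (cases W) auto

lemma length_lift_zigzag: "K \<noteq> [] \<Longrightarrow> length (lift_zigzag K) < length K"
  by (induction K rule: lift_zigzag.induct) auto

context idempotent_generators
begin

definition word_values :: "'s with_one set" where
  "word_values = {\<Theta> w | w. set w \<subseteq> Gamma X}"

lemma val_word_in_word_values: "set w \<subseteq> Gamma X \<Longrightarrow> \<Theta> w \<in> word_values"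
  unfolding word_values_def by blast

lemma one_in_word_values: "1 \<in> word_values"
  using val_word_in_word_values[of "[]"] by simp

lemma val_in_word_values: "g \<in> Gamma X \<Longrightarrow> \<theta> g \<in> word_values"
  using val_word_in_word_values[of "[g]"] by simp

lemma subsemigroup_word_values: "subsemigroup word_values"
  unfolding subsemigroup_def
proof (intro ballI)
  fix a b
  assume "a \<in> word_values" "b \<in> word_values"
  then obtain u w where "a = \<Theta> u" "b = \<Theta> w" "set u \<subseteq> Gamma X" "set w \<subseteq> Gamma X"
    unfolding word_values_def by blast
  then show "a * b \<in> word_values"
    using val_word_in_word_values[of "u @ w"] by simp
qed

inductive zigzag :: "nat \<Rightarrow> 'a gam list \<Rightarrow> bool" where
  single: "l \<in> Gamma X \<Longrightarrow> level l = M \<Longrightarrow> zigzag M [l]"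
| cons: "zigzag M (l' # W) \<Longrightarrow> l \<in> Gamma X \<Longrightarrow> level l = M \<Longrightarrow> parent c l \<Longrightarrow> parent c l'
    \<Longrightarrow> l \<noteq> l' \<Longrightarrow> zigzag M (l # c # l' # W)"

inductive_cases zigzag_ConsE: "zigzag M (l # W)"

lemma zigzag_hd: "zigzag M (l # W) \<Longrightarrow> l \<in> Gamma X \<and> level l = M"
  by (erule zigzag_ConsE) auto

lemma zigzag_tail: "zigzag M (l # c # W) \<Longrightarrow>
    \<exists>l' W'. W = l' # W' \<and> zigzag M (l' # W') \<and> parent c l \<and> parent c l' \<and> l \<noteq> l'"
  by (erule zigzag_ConsE) auto

lemma zigzag_Tri:
  assumes "zigzag M (l # c # l' # W)"
  shows "Tri l' c l \<in> Gamma X" "level (Tri l' c l) = Suc M"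
proof -
  have "l \<in> Gamma X" "l' \<in> Gamma X" "level l' = M" "parent c l" "parent c l'" "l \<noteq> l'"
    using zigzag_hd zigzag_tail assms by blast+
  then show "Tri l' c l \<in> Gamma X" "level (Tri l' c l) = Suc M"
    by (auto simp: Tri_in_Gamma_iff)
qed

lemma zigzag_lift: "zigzag M K \<Longrightarrow> 2 \<le> length K \<Longrightarrow> zigzag (Suc M) (lift_zigzag K)"
proof (induction rule: zigzag.induct)
  case (cons M l' W l c)
  note m = zigzag_Tri[OF zigzag.cons[OF cons.hyps]]
  show ?case
  proof (cases W)
    case Nil
    then show ?thesis
      using m by (simp add: zigzag.single)
  next
    case (Cons c' W')
    then obtain l'' W'' where W': "W' = l'' # W''" "l' \<noteq> l''"
      using zigzag_tail cons.hyps(1) by blast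
    obtain L where L: "lift_zigzag (l' # c' # l'' # W'') = Tri l'' c' l' # L"
      using lift_zigzag_Cons by blast
    have "zigzag (Suc M) (Tri l'' c' l' # L)"
      using cons.IH Cons W' L by simp
    then have "zigzag (Suc M) (Tri l' c l # l' # Tri l'' c' l' # L)"
      using m W'(2) by (intro zigzag.cons) simp_all
    then show ?thesis
      using Cons W' L by simp
  qed
qed simp

lemma zigzag_lift_head:
  assumes "zigzag M (l # c # l' # W)"
  shows "\<theta> c * \<Theta> (lift_zigzag (l # c # l' # W)) = \<Theta> (lift_zigzag (l # c # l' # W))"
    "\<theta> (Tri l' c l) * \<Theta> (lift_zigzag (l # c # l' # W)) = \<Theta> (lift_zigzag (l # c # l' # W))"
proof -
  have m: "Tri l' c l \<in> Gamma X"
    using zigzag_Tri assms by blast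
  then have "\<theta> c * \<theta> (Tri l' c l) = \<theta> (Tri l' c l)"
    using sandwich_center(1)[OF val_Tri_sandwich[OF m] val_idem] Tri_in_GammaD(3) by blast
  moreover obtain L where "lift_zigzag (l # c # l' # W) = Tri l' c l # L"
    using lift_zigzag_Cons by blast
  ultimately show "\<theta> c * \<Theta> (lift_zigzag (l # c # l' # W)) = \<Theta> (lift_zigzag (l # c # l' # W))"
    "\<theta> (Tri l' c l) * \<Theta> (lift_zigzag (l # c # l' # W)) = \<Theta> (lift_zigzag (l # c # l' # W))"
    using val_idem[OF m] by (simp_all add: mult.assoc [symmetric])
qed

text \<open>For the last step \<open>a b a'\<close> of the zigzag, \<open>Q = \<theta> b * \<theta> a'\<close> and \<open>z = \<theta> (Tri a' b a)\<close>.\<close>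

lemma zigzag_val_word:
  "zigzag M K \<Longrightarrow> K = l # c # K' \<Longrightarrow> \<exists>Q z. \<Theta> K = \<theta> l * \<theta> c * \<Theta> (lift_zigzag K) * Q
     \<and> \<Theta> (lift_zigzag K) * z = \<Theta> (lift_zigzag K) \<and> Q * z = z \<and> z \<in> word_values"
proof (induction arbitrary: l c K' rule: zigzag.induct)
  case (cons M l1 W l0 c0)
  then have K: "l0 = l" "c0 = c" "K' = l1 # W" by simp_all
  let ?m = "Tri l1 c l"
  have m: "?m \<in> Gamma X"
    using zigzag_Tri zigzag.cons[OF cons.hyps] K by blast
  have sw: "sandwich (\<theta> l * \<theta> c) (\<theta> c * \<theta> l1) (\<theta> ?m)"
    using val_Tri_sandwich[OF m] .
  have cc: "\<theta> c * \<theta> c = \<theta> c"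
    using val_idem Tri_in_GammaD(3)[OF m] .
  show ?case
  proof (cases W)
    case Nil
    have "\<Theta> (l # c # [l1]) = \<theta> l * \<theta> c * \<Theta> [?m] * (\<theta> c * \<theta> l1)"
      using sandwich_RCL[OF sw cc] by (simp add: mult.assoc)
    moreover have "\<Theta> [?m] * \<theta> ?m = \<Theta> [?m]" "\<theta> c * \<theta> l1 * \<theta> ?m = \<theta> ?m"
      using sw by (simp_all add: sandwich_def)
    ultimately show ?thesis
      using K Nil val_in_word_values[OF m] by auto
  next
    case (Cons c' W')
    then obtain l'' W'' where W': "W' = l'' # W''"
      using zigzag_tail cons.hyps(1) by blast
    let ?K' = "l1 # c' # l'' # W''"
    obtain Q z where Qz: "\<Theta> ?K' = \<theta> l1 * \<theta> c' * \<Theta> (lift_zigzag ?K') * Q"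
      "\<Theta> (lift_zigzag ?K') * z = \<Theta> (lift_zigzag ?K')" "Q * z = z" "z \<in> word_values"
      using cons.IH Cons W' by blast
    have "\<theta> c' * \<Theta> (lift_zigzag ?K') = \<Theta> (lift_zigzag ?K')"
      using zigzag_lift_head(1) cons.hyps(1) Cons W' by blast
    then have "\<Theta> (l # c # ?K') = \<theta> l * \<theta> c * \<theta> l1 * \<Theta> (lift_zigzag ?K') * Q"
      using Qz(1) by (simp add: mult.assoc)
    also have "\<dots> = \<theta> l * \<theta> c * \<Theta> (?m # l1 # lift_zigzag ?K') * Q"
      using sandwich_insert[OF sw cc] by (simp add: mult.assoc)
    also have "\<dots> = \<theta> l * \<theta> c * \<Theta> (lift_zigzag (l # c # ?K')) * Q"
      by simp
    finally have "\<Theta> (l # c # ?K') = \<theta> l * \<theta> c * \<Theta> (lift_zigzag (l # c # ?K')) * Q" .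
    moreover have "\<Theta> (lift_zigzag (l # c # ?K')) * z = \<Theta> (lift_zigzag (l # c # ?K'))"
      using Qz(2) by (simp add: mult.assoc)
    ultimately show ?thesis
      using K Cons W' Qz(3,4) by blast
  qed
qed simp

lemma zigzag_regular: "zigzag M K \<Longrightarrow> regular_in word_values (\<Theta> K)"
proof (induction "length K" arbitrary: M K rule: less_induct)
  case less
  show ?case
  proof (cases K)
    case Nil
    then show ?thesis
      using less.prems by (auto elim: zigzag.cases)
  next
    case (Cons l K')
    show ?thesis
    proof (cases K')
      case Nil
      then show ?thesis
        using Cons zigzag_hd less.prems val_in_word_values val_idem
        by (simp add: regular_in_idem)
    next
      case (Cons c K'')
      then obtain l' W where K: "K = l # c # l' # W"
        using zigzag_tail less.prems \<open>K = l # K'\<close> by blast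
      let ?m = "Tri l' c l" and ?b = "\<Theta> (lift_zigzag K)"
      have m: "?m \<in> Gamma X"
        using zigzag_Tri less.prems K by blast
      obtain Q z where Qz: "\<Theta> K = \<theta> l * \<theta> c * ?b * Q" "?b * z = ?b" "Q * z = z"
        "z \<in> word_values"
        using zigzag_val_word[OF less.prems K] by blast
      have "regular_in word_values ?b"
        using less.hyps[OF _ zigzag_lift[OF less.prems]] length_lift_zigzag[of K] K by simp
      moreover have "\<theta> ?m * (\<theta> l * \<theta> c) = \<theta> ?m"
        using val_Tri_sandwich[OF m] by (simp add: sandwich_def)
      moreover have "\<theta> ?m * ?b = ?b"
        using zigzag_lift_head(2) less.prems K by blast
      ultimately show ?thesis
        using regular_in_sandwiched[OF subsemigroup_word_values] Qz val_in_word_values[OF m]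
        by metis
    qed
  qed
qed

end

section \<open>Reducing walks to zigzags\<close>

definition ends_ascending :: "'a gam list \<Rightarrow> bool" where
  "ends_ascending W \<longleftrightarrow> (\<exists>W1 x y. W = W1 @ [x, y] \<and> parent x y)"

text \<open>A valley \<open>x u y\<close> can be shortcut to \<open>x\<close> if \<open>x = y\<close>, and otherwise filled in by
  \<open>x (Tri y u x) y\<close>, which stays within height \<open>M\<close> when \<open>level u + 2 \<le> M\<close>.\<close>

definition reducible_valley :: "nat \<Rightarrow> 'a gam list \<Rightarrow> bool" where
  "reducible_valley M W \<longleftrightarrow> (\<exists>W1 x u y W2. W = W1 @ [x, u, y] @ W2
     \<and> parent u x \<and> parent u y \<and> (x = y \<or> level u + 2 \<le> M))"

lemma ends_ascending_Cons:
  assumes "ends_ascending (a # b # c # W)"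
  shows "ends_ascending (b # c # W)"
proof -
  obtain W1 x y where W: "a # b # c # W = W1 @ [x, y]" "parent x y"
    using assms unfolding ends_ascending_def by blast
  then obtain W1' where "W1 = a # W1'"
    by (cases W1) auto
  then show ?thesis
    using W unfolding ends_ascending_def by auto
qed

lemma ends_ascending_two: "ends_ascending [a, b] \<Longrightarrow> parent a b"
  unfolding ends_ascending_def by (auto simp: append_eq_Cons_conv)

lemma reducible_valley_Cons: "reducible_valley M W \<Longrightarrow> reducible_valley M (a # W)"
  unfolding reducible_valley_def by (metis append_Cons)

lemma successively_replace:
  assumes "successively P (W1 @ A @ W2)" "successively P B"
    and "A \<noteq> []" "B \<noteq> []" "hd A = hd B" "last A = last B"
  shows "successively P (W1 @ B @ W2)"
proof -
  have "successively P W1" "successively P (A @ W2)" "W1 = [] \<or> P (last W1) (hd A)"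
    using assms(1,3) by (simp_all add: successively_append_iff)
  moreover have "successively P W2" "W2 = [] \<or> P (last A) (hd W2)"
    using calculation(2) assms(3) by (simp_all add: successively_append_iff)
  ultimately show ?thesis
    using assms(2-6) by (simp add: successively_append_iff)
qed

context idempotent_generators
begin

lemma walk_Cons_Cons [simp]: "walk (a # b # W) \<longleftrightarrow> a \<in> Gamma X \<and> adjacent a b \<and> walk (b # W)"
  by (auto simp: walk_def)

lemma walk_hd: "walk (a # W) \<Longrightarrow> a \<in> Gamma X"
  by (simp add: walk_def)

lemma walk_replace:
  assumes "walk (W1 @ A @ W2)" "walk B" "A \<noteq> []" "B \<noteq> []" "hd A = hd B" "last A = last B"
  shows "walk (W1 @ B @ W2)"
  using assms successively_replace[of adjacent W1 A W2 B] unfolding walk_def by auto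

lemma valley_exists:
  "walk W \<Longrightarrow> W = a # v # W' \<Longrightarrow> parent v a \<Longrightarrow> ends_ascending W \<Longrightarrow>
    \<exists>W1 x u y W2. W = W1 @ [x, u, y] @ W2 \<and> parent u x \<and> parent u y \<and> level u \<le> level v"
proof (induction W' arbitrary: a v W)
  case Nil
  then show ?case
    using ends_ascending_two[of a v] parent_asym[of v a X] by (auto simp: walk_def)
next
  case (Cons b W'')
  show ?case
  proof (cases "parent v b")
    case True
    then show ?thesis
      using Cons.prems by (intro exI[of _ "[]"]) auto
  next
    case False
    then have down: "parent b v"
      using Cons.prems(1,2) by (simp add: adjacent_def)
    moreover have "walk (v # b # W'')" "ends_ascending (v # b # W'')"
      using Cons.prems ends_ascending_Cons by auto
    ultimately obtain W1 x u y W2 where valley: "v # b # W'' = W1 @ [x, u, y] @ W2"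
      "parent u x" "parent u y" "level u \<le> level b"
      using Cons.IH[OF _ HOL.refl] by blast
    have "level v = Suc (level b)"
      using parent_in_Gamma(2)[OF down] Cons.prems(1,2) by auto
    then show ?thesis
      using valley Cons.prems(2) by (intro exI[of _ "a # W1"]) auto
  qed
qed

lemma double_descent_reducible:
  assumes walk: "walk (a # v # b # W)" and bounded: "\<forall>w\<in>set (a # v # b # W). level w \<le> M"
    and "parent v a" "parent b v" "ends_ascending (a # v # b # W)"
  shows "reducible_valley M (a # v # b # W)"
proof -
  have "walk (v # b # W)" "ends_ascending (v # b # W)"
    using assms ends_ascending_Cons by auto
  then obtain W1 x u y W2 where "v # b # W = W1 @ [x, u, y] @ W2"
      "parent u x" "parent u y" "level u \<le> level b"
    using valley_exists[OF _ HOL.refl assms(4)] by blast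
  moreover have "level a = Suc (level v)" "level v = Suc (level b)"
    using parent_in_Gamma(2) assms(3,4) walk by auto
  ultimately show ?thesis
    unfolding reducible_valley_def using bounded
    by (metis append_Cons add_2_eq_Suc' le_trans Suc_le_mono list.set_intros(1))
qed

lemma irreducible_walk_zigzag:
  "walk W \<Longrightarrow> \<forall>w\<in>set W. level w \<le> M \<Longrightarrow> W = a # v # W' \<Longrightarrow> parent v a \<Longrightarrow> ends_ascending W
    \<Longrightarrow> \<not> reducible_valley M W \<Longrightarrow> zigzag M W"
proof (induction "length W" arbitrary: a v W W' rule: less_induct)
  case less
  have a: "a \<in> Gamma X" "level a = Suc (level v)" "level a \<le> M"
    using less.prems(1-4) parent_in_Gamma by auto
  obtain b W'' where W: "W = a # v # b # W''"
    using less.prems(3-5) ends_ascending_two[of a v] parent_asym[of v a X] a(1) by (cases W') auto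
  have "parent v b"
    using double_descent_reducible[of a v b W'' M] less.prems W by (auto simp: adjacent_def)
  have "\<not> (a = b \<or> level v + 2 \<le> M)"
    using less.prems(4,6) \<open>parent v b\<close> W unfolding reducible_valley_def
    by (metis append.left_neutral append_Cons)
  moreover have "b \<in> Gamma X"
    using walk_hd less.prems(1) W by auto
  moreover have "level b = Suc (level v)"
    using parent_in_Gamma(2)[OF \<open>parent v b\<close> \<open>b \<in> Gamma X\<close>] .
  ultimately have b: "a \<noteq> b" "level a = M" "level b = M" "b \<in> Gamma X"
    using a by auto
  have "zigzag M (b # W'')"
  proof (cases W'')
    case Nil
    then show ?thesis
      using b by (simp add: zigzag.single)
  next
    case (Cons d W3)
    have "d \<in> Gamma X" "level d \<le> M"
      using walk_hd less.prems(1,2) W Cons by auto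
    then have "\<not> parent b d"
      using parent_in_Gamma(2)[of b d] b(3) by auto
    then have "parent d b"
      using less.prems(1) W Cons by (simp add: adjacent_def)
    moreover have "ends_ascending (b # d # W3)"
      using less.prems(5) W Cons ends_ascending_Cons by blast
    moreover have "\<not> reducible_valley M (b # d # W3)"
      using less.prems(6) W Cons reducible_valley_Cons by blast
    ultimately show ?thesis
      using less.hyps[OF _ _ _ HOL.refl] less.prems(1,2) W Cons by simp
  qed
  then have "zigzag M (a # v # b # W'')"
    using a(1) b(2) less.prems(4) \<open>parent v b\<close> b(1) by (rule zigzag.cons)
  then show "zigzag M W"
    using W by simp
qed

lemma val_word_shortcut:
  assumes "parent u x" "x \<in> Gamma X"
  shows "\<Theta> (W1 @ [x, u, x] @ W2) = \<Theta> (W1 @ [x] @ W2)"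
proof -
  have "\<Theta> [x, u, x] = \<Theta> [x]"
    using val_parent[OF assms(2,1)] by (simp add: mult.assoc)
  then show ?thesis
    by (metis map_append prod_list.append)
qed

lemma val_word_fill:
  assumes "Tri y u x \<in> Gamma X"
  shows "\<Theta> (W1 @ [x, u, y] @ W2) = \<Theta> (W1 @ [x, Tri y u x, y] @ W2)"
proof -
  note sw = val_Tri_sandwich[OF assms] and cc = val_idem[OF Tri_in_GammaD(3)[OF assms]]
  have "\<theta> x * \<theta> u * \<theta> y = \<theta> x * (\<theta> u * \<theta> (Tri y u x)) * \<theta> y"
    using sandwich_insert[OF sw cc] by (simp add: mult.assoc)
  then have "\<Theta> [x, u, y] = \<Theta> [x, Tri y u x, y]"
    using sandwich_center(1)[OF sw cc] by (simp add: mult.assoc)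
  then show ?thesis
    by (metis map_append prod_list.append)
qed

lemma regular_drop_first_ascent:
  assumes "walk (a # v # W)" "parent a v" "regular_in word_values (\<Theta> (v # W))"
  shows "regular_in word_values (\<Theta> (a # v # W))"
proof -
  have v: "v \<in> Gamma X"
    using assms(1) by (auto dest: walk_hd)
  have "\<theta> v * \<theta> a * \<Theta> (v # W) = \<Theta> (v # W)"
    using val_parent[OF v assms(2)] by (simp add: mult.assoc [symmetric])
  then show ?thesis
    using regular_in_prepend[OF subsemigroup_word_values assms(3) val_in_word_values[OF v]] by simp
qed

lemma regular_drop_last_descent:
  assumes "walk (W @ [x, y])" "parent y x" "regular_in word_values (\<Theta> (W @ [x]))"
  shows "regular_in word_values (\<Theta> (W @ [x, y]))"
proof -
  have x: "x \<in> Gamma X"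
    using assms(1) by (simp add: walk_def)
  have "\<Theta> (W @ [x]) * \<theta> y * \<theta> x = \<Theta> (W @ [x])"
    using val_parent[OF x assms(2)] by (simp add: mult.assoc)
  then show ?thesis
    using regular_in_append[OF subsemigroup_word_values assms(3) val_in_word_values[OF x]]
    by (simp add: mult.assoc)
qed

lemma reducible_walk_shrinks:
  assumes "walk W" "\<forall>w\<in>set W. level w \<le> M" "reducible_valley M W"
  obtains W' where "walk W'" "\<forall>w\<in>set W'. level w \<le> M" "\<Theta> W' = \<Theta> W"
    "(\<Sum>w\<leftarrow>W'. M - level w) < (\<Sum>w\<leftarrow>W. M - level w)"
proof -
  obtain W1 x u y W2 where W: "W = W1 @ [x, u, y] @ W2" "parent u x" "parent u y"
    and low: "x = y \<or> level u + 2 \<le> M"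
    using assms(3) unfolding reducible_valley_def by blast
  have xy: "x \<in> Gamma X" "y \<in> Gamma X" "level x = Suc (level u)" "level y = Suc (level u)"
    using assms(1) W parent_in_Gamma(2) by (auto simp: walk_def)
  have "level x \<le> M"
    using assms(2) W by simp
  show thesis
  proof (cases "x = y")
    case True
    show thesis
    proof
      show "walk (W1 @ [x] @ W2)"
        using walk_replace[of W1 "[x, u, y]" W2 "[x]"] assms(1) W True xy by (simp add: walk_def)
      show "\<Theta> (W1 @ [x] @ W2) = \<Theta> W"
        using val_word_shortcut[OF W(2) xy(1)] W True by simp
    qed (use assms(2) W True xy \<open>level x \<le> M\<close> in auto)
  next
    case False
    let ?m = "Tri y u x"
    have m: "?m \<in> Gamma X" "level ?m = level u + 2"
      using xy W(2,3) False by (auto simp: Tri_in_Gamma_iff)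
    show thesis
    proof
      show "walk (W1 @ [x, ?m, y] @ W2)"
        using walk_replace[of W1 "[x, u, y]" W2 "[x, ?m, y]"] assms(1) W xy m
        by (simp add: walk_def adjacent_def)
      show "\<Theta> (W1 @ [x, ?m, y] @ W2) = \<Theta> W"
        using val_word_fill[OF m(1)] W by simp
    qed (use assms(2) W False low m xy in auto)
  qed
qed

lemma Cons_Cons_eq_snoc_snoc: "\<exists>W1 x y. a # v # W = W1 @ [x, y]"
proof (induction W arbitrary: a v)
  case (Cons c W)
  then obtain W1 x y where "v # c # W = W1 @ [x, y]"
    by blast
  then show ?case
    by (metis append_Cons)
qed simp

lemma walk_reduces:
  assumes walk: "walk W" and bounded: "\<forall>w\<in>set W. level w \<le> M" and W: "W = a # v # W'"
  obtains "zigzag M W"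
  | W'' where "walk W''" "\<forall>w\<in>set W''. level w \<le> M"
      "(\<Sum>w\<leftarrow>W''. M - level w) < (\<Sum>w\<leftarrow>W. M - level w)"
      "regular_in word_values (\<Theta> W'') \<Longrightarrow> regular_in word_values (\<Theta> W)"
proof (cases "parent a v")
  case True
  have v: "v \<in> Gamma X" "level v \<le> M"
    using walk bounded W by (auto dest: walk_hd)
  then have "(\<Sum>w\<leftarrow>v # W'. M - level w) < (\<Sum>w\<leftarrow>W. M - level w)"
    using W parent_in_Gamma(2)[OF True v(1)] by simp
  then show thesis
    using that(2)[of "v # W'"] regular_drop_first_ascent walk bounded W True by simp
next
  case False
  then have down: "parent v a"
    using walk W by (simp add: adjacent_def)
  obtain W1 x y where W1: "W = W1 @ [x, y]"
    using Cons_Cons_eq_snoc_snoc[of a v W'] W by blast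
  have x: "x \<in> Gamma X" "level x \<le> M" and "adjacent x y"
    using walk bounded W1 by (auto simp: walk_def successively_append_iff)
  then consider "parent y x" | "parent x y"
    by (auto simp: adjacent_def)
  then show thesis
  proof cases
    case 1
    then have "(\<Sum>w\<leftarrow>W1 @ [x]. M - level w) < (\<Sum>w\<leftarrow>W. M - level w)"
      using W1 x parent_in_Gamma(2)[OF 1 x(1)] by simp
    moreover have "walk (W1 @ [x])"
      using walk W1 by (simp add: walk_def successively_append_iff)
    ultimately show thesis
      using that(2)[of "W1 @ [x]"] regular_drop_last_descent walk bounded W1 1 by simp
  next
    case 2
    then have "ends_ascending W"
      using W1 unfolding ends_ascending_def by blast
    then show thesis
      using that irreducible_walk_zigzag[OF walk bounded W down] reducible_walk_shrinks[OF walk bounded]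
      by metis
  qed
qed

lemma walk_regular: "walk W \<Longrightarrow> \<forall>w\<in>set W. level w \<le> M \<Longrightarrow> regular_in word_values (\<Theta> W)"
proof (induction "\<Sum>w\<leftarrow>W. M - level w" arbitrary: W rule: less_induct)
  case less
  show ?case
  proof (cases W rule: remdups_adj.cases)
    case (3 a v W')
    then show ?thesis
      using walk_reduces[OF less.prems 3] zigzag_regular less.hyps by metis
  qed (use less.prems one_in_word_values val_in_word_values val_idem
      in \<open>auto simp: walk_def intro!: regular_in_idem\<close>)
qed

end

lemma rho_cls_eq: "rho X u w \<Longrightarrow> cls X u = cls X w"
  unfolding cls_def using rho.sym rho.trans by blast

lemma self_in_cls: "w \<in> words X \<Longrightarrow> w \<in> cls X w"
  unfolding cls_def by (rule CollectI, rule rho.refl)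

lemma rho_Ones: "w \<noteq> [] \<Longrightarrow> set w \<subseteq> {One} \<Longrightarrow> rho X w [One]"
proof (induction w)
  case (Cons g w)
  show ?case
  proof (cases "w = []")
    case True
    then show ?thesis
      using Cons.prems rho.refl[of "[One]" X] by (simp add: words_def)
  next
    case False
    then have "rho X ([One] @ w @ []) ([One] @ [One] @ [])"
      using Cons by (intro rho.compat) auto
    then show ?thesis
      using Cons.prems rho.gen1[of One X] rho.trans by fastforce
  qed
qed simp

context idempotent_generators
begin

definition word_image :: "'s set" where
  "word_image = {s. El s \<in> word_values}"

lemma word_image_subset_T: "word_image \<subseteq> T"
  using val_word_in_T1 unfolding word_image_def word_values_def by force

lemma subsemigroup_word_image: "subsemigroup word_image"
  using subsemigroup_word_values unfolding subsemigroup_def word_image_def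
  by (metis mem_Collect_eq times_with_one.simps(3))

lemma generators_word_image: "\<phi> ` X \<subseteq> word_image"
proof
  fix s
  assume "s \<in> \<phi> ` X"
  then obtain x where "x \<in> X" "s = \<phi> x"
    by blast
  then show "s \<in> word_image"
    using val_in_word_values[of "Gen x"] unfolding word_image_def by simp
qed

lemma regular_set_word_image: "regular_set word_image"
  unfolding regular_set_def
proof
  fix s
  assume "s \<in> word_image"
  then obtain w where w: "set w \<subseteq> Gamma X" "El s = \<Theta> w"
    unfolding word_image_def word_values_def by blast
  then obtain W where W: "walk (One # W)" "\<Theta> W = El s"
    using word_walk by metis
  have "\<forall>g\<in>set (One # W). level g \<le> Max (level ` set (One # W))"
    by simp
  from walk_regular[OF W(1) this]
  obtain t where t: "t \<in> word_values" "El s * t * El s = El s"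
    using W(2) unfolding regular_in_def by auto
  show "\<exists>b\<in>word_image. s * b * s = s"
  proof (cases t rule: with_one.exhaust)
    case Unit
    then have "s * s * s = s"
      using t(2) by (simp add: one_with_one_def [symmetric] mult.assoc)
    then show ?thesis
      using \<open>s \<in> word_image\<close> by blast
  next
    case (El b)
    then show ?thesis
      using t unfolding word_image_def by auto
  qed
qed

definition psi :: "'a gam list set \<Rightarrow> 's" where
  "psi A = the_El (\<Theta> (SOME w. w \<in> A))"

lemma psi_eq: "w \<in> A \<Longrightarrow> \<forall>w'\<in>A. \<Theta> w' = El s \<Longrightarrow> psi A = s"
  unfolding psi_def by (metis someI with_one.sel)

lemma val_word_cls: "w' \<in> cls X w \<Longrightarrow> \<Theta> w' = \<Theta> w"
  unfolding cls_def using rho_val_word by fastforce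

lemma psi_cls: "w \<in> words X \<Longrightarrow> \<Theta> w = El s \<Longrightarrow> psi (cls X w) = s"
  using psi_eq self_in_cls val_word_cls by metis

lemma FT_val_word:
  assumes "A \<in> FT X"
  obtains w where "A = cls X w" "w \<in> words X" "\<Theta> w = El (psi A)"
proof -
  obtain w where w: "A = cls X w" "w \<in> words X" "cls X w \<noteq> cls X [One]"
    using assms unfolding FT_def FT1_def by blast
  have "\<Theta> w \<noteq> 1"
  proof
    assume "\<Theta> w = 1"
    then have "set w \<subseteq> {One}"
      using val_word_eq_1 w(2) by (simp add: words_def)
    then have "rho X w [One]"
      using rho_Ones w(2) unfolding words_def by blast
    then show False
      using w(3) rho_cls_eq by blast
  qed
  then obtain s where s: "\<Theta> w = El s"
    by (cases "\<Theta> w") (auto simp: one_with_one_def)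
  then have "psi A = s"
    using psi_cls w(1,2) by simp
  then show thesis
    using that w(1,2) s by simp
qed

lemma psi_mult:
  assumes "A \<in> FT X" "B \<in> FT X"
  shows "psi (ft_mult X A B) = psi A * psi B"
proof -
  obtain u where u: "A = cls X u" "u \<in> words X" "\<Theta> u = El (psi A)"
    by (rule FT_val_word[OF assms(1)])
  obtain v where v: "B = cls X v" "v \<in> words X" "\<Theta> v = El (psi B)"
    by (rule FT_val_word[OF assms(2)])
  have "u @ v \<in> words X"
    using u(2) v(2) unfolding words_def by auto
  then have "u @ v \<in> ft_mult X A B"
    unfolding ft_mult_def using u v self_in_cls rho.refl by blast
  moreover have "\<Theta> w = El (psi A * psi B)" if w: "w \<in> ft_mult X A B" for w
  proof -
    obtain u' v' where "u' \<in> A" "v' \<in> B" "rho X (u' @ v') w"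
      using w unfolding ft_mult_def by blast
    then have "\<Theta> w = \<Theta> u' * \<Theta> v'"
      using rho_val_word by fastforce
    then show ?thesis
      using \<open>u' \<in> A\<close> \<open>v' \<in> B\<close> u v val_word_cls by simp
  qed
  ultimately show ?thesis
    using psi_eq by blast
qed

lemma psi_Gen: "x \<in> X \<Longrightarrow> psi (cls X [Gen x]) = \<phi> x"
  by (rule psi_cls) (simp_all add: words_def)

lemma psi_image: "psi ` FT X = word_image"
proof
  show "psi ` FT X \<subseteq> word_image"
    unfolding word_image_def word_values_def words_def using FT_val_word by (force simp: words_def)
  show "word_image \<subseteq> psi ` FT X"
  proof
    fix s
    assume "s \<in> word_image"
    then obtain w where w: "set w \<subseteq> Gamma X" "\<Theta> w = El s"
      unfolding word_image_def word_values_def by auto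
    then have ww: "w \<in> words X"
      unfolding words_def by auto
    have "cls X w \<noteq> cls X [One]"
      using self_in_cls[OF ww] val_word_cls w(2) by fastforce
    then have "cls X w \<in> FT X"
      using ww unfolding FT_def FT1_def by blast
    then show "s \<in> psi ` FT X"
      using psi_cls[OF ww w(2)] by force
  qed
qed

end

theorem corollary5p4:
  fixes X :: "'a set" and \<phi> :: "'a \<Rightarrow> 's::semigroup_mult" and T :: "'s set"
  assumes "X \<noteq> {}"
    and "inj_on \<phi> X" and "\<phi> ` X \<subseteq> idempotents"
    and "subsemigroup T" and "regular_set T" and "\<phi> ` X \<subseteq> T"
    and "\<forall>U. U \<subseteq> T \<and> subsemigroup U \<and> regular_set U \<and> \<phi> ` X \<subseteq> U \<longrightarrow> U = T"
  shows "\<exists>\<psi> :: 'a gam list set \<Rightarrow> 's.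
           (\<forall>A\<in>FT X. \<forall>B\<in>FT X. \<psi> (ft_mult X A B) = \<psi> A * \<psi> B)
         \<and> (\<forall>x\<in>X. \<psi> (cls X [Gen x]) = \<phi> x)
         \<and> \<psi> ` FT X = T"
proof -
  interpret idempotent_generators X \<phi> T
    using assms(3-6) by unfold_locales
  have "word_image = T"
    using assms(7) word_image_subset_T subsemigroup_word_image regular_set_word_image generators_word_image
    by blast
  then show ?thesis
    using psi_mult psi_Gen psi_image by blast
qed

end
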